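(* For every $g\in\mathrm{Sp}(2,1)$, the set of traces of the elements of $g\,\mathrm{SU}(2,1)\,g^{-1}$ is not contained in $\mathbb R$.
   Context: $\mathbb H$ denotes the quaternions. $\mathrm{Sp}(2,1)=\{A\in\mathrm{GL}(3,\mathbb H): A^*I_{2,1}A=I_{2,1}\}$ with $A^*$ the conjugate transpose and $I_{2,1}=\mathrm{diag}(1,1,-1)$. $\mathrm{SU}(2,1)\subset\mathrm{Sp}(2,1)$ is the subgroup of complex matrices of determinant $1$ preserving $I_{2,1}$. The trace of a quaternionic matrix is the sum of its diagonal entries. *)

theory Defs
  imports Complex_Main
begin

datatype quat = Quat (qre: real) (qi: real) (qj: real) (qk: real)

definition qadd :: "quat \<Rightarrow> quat \<Rightarrow> quat" where
  "qadd p q = Quat (qre p + qre q) (qi p + qi q) (qj p + qj q) (qk p + qk q)"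

definition qmult :: "quat \<Rightarrow> quat \<Rightarrow> quat" where
  "qmult p q = Quat
     (qre p * qre q - qi p * qi q - qj p * qj q - qk p * qk q)
     (qre p * qi q + qi p * qre q + qj p * qk q - qk p * qj q)
     (qre p * qj q - qi p * qk q + qj p * qre q + qk p * qi q)
     (qre p * qk q + qi p * qj q - qj p * qi q + qk p * qre q)"

definition qcnj :: "quat \<Rightarrow> quat" where
  "qcnj q = Quat (qre q) (- qi q) (- qj q) (- qk q)"

definition qof_real :: "real \<Rightarrow> quat" where
  "qof_real r = Quat r 0 0 0"

definition qof_complex :: "complex \<Rightarrow> quat" where
  "qof_complex z = Quat (Re z) (Im z) 0 0"

definition q_is_real :: "quat \<Rightarrow> bool" where
  "q_is_real q \<longleftrightarrow> q \<in> range qof_real"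

definition q_is_complex :: "quat \<Rightarrow> bool" where
  "q_is_complex q \<longleftrightarrow> q \<in> range qof_complex"

type_synonym qmat = "nat \<Rightarrow> nat \<Rightarrow> quat"

text \<open>Only entries with indices < 3 are meaningful; equality of matrices is entrywise on them.\<close>
definition qmat_eq :: "qmat \<Rightarrow> qmat \<Rightarrow> bool" where
  "qmat_eq A B \<longleftrightarrow> (\<forall>i<3. \<forall>j<3. A i j = B i j)"

definition qmat_mult :: "qmat \<Rightarrow> qmat \<Rightarrow> qmat" where
  "qmat_mult A B = (\<lambda>i j. qadd (qmult (A i 0) (B 0 j))
                         (qadd (qmult (A i 1) (B 1 j)) (qmult (A i 2) (B 2 j))))"

definition qmat_adj :: "qmat \<Rightarrow> qmat" where
  "qmat_adj A = (\<lambda>i j. qcnj (A j i))"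

definition qmat_one :: qmat where
  "qmat_one = (\<lambda>i j. if i = j then qof_real 1 else qof_real 0)"

definition I21 :: qmat where
  "I21 = (\<lambda>i j. if i = j then (if i = 2 then qof_real (-1) else qof_real 1) else qof_real 0)"

definition qmat_trace :: "qmat \<Rightarrow> quat" where
  "qmat_trace A = qadd (A 0 0) (qadd (A 1 1) (A 2 2))"

definition qmat_invertible :: "qmat \<Rightarrow> bool" where
  "qmat_invertible A \<longleftrightarrow> (\<exists>B. qmat_eq (qmat_mult A B) qmat_one \<and> qmat_eq (qmat_mult B A) qmat_one)"

definition Sp21 :: "qmat set" where
  "Sp21 = {A. qmat_invertible A \<and> qmat_eq (qmat_mult (qmat_adj A) (qmat_mult I21 A)) I21}"

definition cdet3 :: "(nat \<Rightarrow> nat \<Rightarrow> complex) \<Rightarrow> complex" where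
  "cdet3 M = M 0 0 * (M 1 1 * M 2 2 - M 1 2 * M 2 1)
           - M 0 1 * (M 1 0 * M 2 2 - M 1 2 * M 2 0)
           + M 0 2 * (M 1 0 * M 2 1 - M 1 1 * M 2 0)"

definition SU21 :: "qmat set" where
  "SU21 = {A. (\<forall>i<3. \<forall>j<3. q_is_complex (A i j))
              \<and> cdet3 (\<lambda>i j. Complex (qre (A i j)) (qi (A i j))) = 1
              \<and> qmat_eq (qmat_mult (qmat_adj A) (qmat_mult I21 A)) I21}"

end

theory Submission
  imports Defs
begin

text \<open>
  Suppose every trace of \<open>g A g\<^sup>-\<^sup>1\<close>, \<open>A \<in> SU(2,1)\<close>, were real. For a pure imaginary quaternion \<open>u\<close>,
  cyclicity of \<open>Re\<close> gives \<open>Re (u tr(g A g\<^sup>-\<^sup>1)) = Re tr(U\<^sub>u A)\<close> with \<open>U\<^sub>u = g\<^sup>-\<^sup>1 u g\<close>, and this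
  vanishes for all \<open>A\<close>. Since \<open>SU(2,1)\<close> spans the complex \<open>3\<times>3\<close> matrices over \<open>\<real>\<close>, all entries of
  \<open>U\<^sub>u\<close> lie in \<open>j\<complex>\<close>. But \<open>j\<complex> \<cdot> j\<complex> \<subseteq> \<complex>\<close>, so \<open>U\<^sub>k = U\<^sub>i U\<^sub>j\<close> has entries in \<open>\<complex> \<inter> j\<complex> = 0\<close>,
  contradicting \<open>U\<^sub>k U\<^sub>k = U\<^bsub>k\<^sup>2\<^esub> = -I\<close>.
\<close>

lemma quat_eq_iff: "p = q \<longleftrightarrow> qre p = qre q \<and> qi p = qi q \<and> qj p = qj q \<and> qk p = qk q"
  by (cases p; cases q) auto

instantiation quat :: ring_1
begin
definition "0 = Quat 0 0 0 0"
definition "1 = Quat 1 0 0 0"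
definition "p + q = qadd p q"
definition "- q = Quat (- qre q) (- qi q) (- qj q) (- qk q)"
definition "p - q = p + - (q::quat)"
definition "p * q = qmult p q"
instance
  by standard (auto simp: quat_eq_iff zero_quat_def one_quat_def plus_quat_def uminus_quat_def
     minus_quat_def times_quat_def qadd_def qmult_def algebra_simps)
end

lemma quat_components [simp]:
  "qre (p + q) = qre p + qre q" "qi (p + q) = qi p + qi q" "qj (p + q) = qj p + qj q" "qk (p + q) = qk p + qk q"
  "qre (p * q) = qre p * qre q - qi p * qi q - qj p * qj q - qk p * qk q"
  "qi (p * q) = qre p * qi q + qi p * qre q + qj p * qk q - qk p * qj q"
  "qj (p * q) = qre p * qj q - qi p * qk q + qj p * qre q + qk p * qi q"
  "qk (p * q) = qre p * qk q + qi p * qj q - qj p * qi q + qk p * qre q"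
  "qre 0 = 0" "qi 0 = 0" "qj 0 = 0" "qk 0 = 0"
  "qre 1 = 1" "qi 1 = 0" "qj 1 = 0" "qk 1 = 0"
  "qre (- p) = - qre p" "qi (- p) = - qi p" "qj (- p) = - qj p" "qk (- p) = - qk p"
  "qre (qof_complex z) = Re z" "qi (qof_complex z) = Im z" "qj (qof_complex z) = 0" "qk (qof_complex z) = 0"
  by (simp_all add: zero_quat_def one_quat_def plus_quat_def uminus_quat_def times_quat_def
      qadd_def qmult_def qof_complex_def)

lemma qof_real_0_1 [simp]: "qof_real 0 = 0" "qof_real 1 = 1"
  by (simp_all add: qof_real_def zero_quat_def one_quat_def)

lemma qre_sum: "qre (sum f A) = (\<Sum>x\<in>A. qre (f x))"
  by (induction A rule: infinite_finite_induct) auto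

lemma qre_mult_commute: "qre (p * q) = qre (q * p)"
  by (simp add: algebra_simps)

lemma sum_lessThan_3: "(\<Sum>k<3. f k) = f 0 + f 1 + f (2::nat)"
  by (simp add: eval_nat_numeral add.assoc)

lemma all_less_3: "(\<forall>i<(3::nat). P i) \<longleftrightarrow> P 0 \<and> P 1 \<and> P 2"
  by (auto simp: eval_nat_numeral less_Suc_eq)

lemma qmat_mult_eq_sum: "qmat_mult A B i j = (\<Sum>k<3. A i k * B k j)"
  by (simp add: qmat_mult_def sum_lessThan_3 plus_quat_def[symmetric] times_quat_def[symmetric] add.assoc)

lemma qmat_trace_eq_sum: "qmat_trace A = (\<Sum>k<3. A k k)"
  by (simp add: qmat_trace_def sum_lessThan_3 plus_quat_def[symmetric] add.assoc)

text \<open>Entries in \<open>j\<complex> = \<real>j + \<real>k\<close>, the orthogonal complement of \<open>\<complex>\<close> in \<open>\<bbbH>\<close>.\<close>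
definition qmat_in_jC :: "qmat \<Rightarrow> bool" where
  "qmat_in_jC M \<longleftrightarrow> (\<forall>i<3. \<forall>j<3. qre (M i j) = 0 \<and> qi (M i j) = 0)"

lemma q_is_complex_iff: "q_is_complex q \<longleftrightarrow> qj q = 0 \<and> qk q = 0"
  unfolding q_is_complex_def
  by (auto simp: quat_eq_iff intro: range_eqI[of _ _ "Complex (qre q) (qi q)"])

lemma qmat_in_jC_mult_complex:
  assumes "qmat_in_jC A" "qmat_in_jC B" "i < 3" "j < 3"
  shows "q_is_complex (\<Sum>l<3. A i l * B l j)"
proof -
  have "\<forall>l<3. qre (A i l) = 0 \<and> qi (A i l) = 0 \<and> qre (B l j) = 0 \<and> qi (B l j) = 0"
    using assms by (simp add: qmat_in_jC_def)
  then show ?thesis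
    by (simp add: q_is_complex_iff all_less_3 sum_lessThan_3)
qed

definition scalar_conj :: "qmat \<Rightarrow> quat \<Rightarrow> qmat \<Rightarrow> qmat" where
  "scalar_conj ginv u g = (\<lambda>i j. \<Sum>k<3. ginv i k * u * g k j)"

lemma qre_mult_trace_conj:
  "qre (u * qmat_trace (qmat_mult g (qmat_mult A ginv)))
     = (\<Sum>k<3. \<Sum>j<3. qre (scalar_conj ginv u g k j * A j k))"
proof -
  have "qre (u * qmat_trace (qmat_mult g (qmat_mult A ginv)))
      = (\<Sum>i<3. \<Sum>j<3. \<Sum>k<3. qre (u * g i j * A j k * ginv k i))"
    by (simp add: qmat_trace_eq_sum qmat_mult_eq_sum sum_distrib_left qre_sum mult.assoc)
  also have "\<dots> = (\<Sum>i<3. \<Sum>j<3. \<Sum>k<3. qre (ginv k i * u * g i j * A j k))"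
    by (rule sum.cong[OF refl])+ (metis qre_mult_commute mult.assoc) \<comment> \<open>\<open>Re\<close> is cyclic\<close>
  also have "\<dots> = (\<Sum>k<3. \<Sum>j<3. \<Sum>i<3. qre (ginv k i * u * g i j * A j k))"
    by (subst sum.swap) (subst (2) sum.swap, subst sum.swap, simp)
  also have "\<dots> = (\<Sum>k<3. \<Sum>j<3. qre (scalar_conj ginv u g k j * A j k))"
    by (simp add: scalar_conj_def sum_distrib_right qre_sum)
  finally show ?thesis .
qed

lemma scalar_conj_mult:
  assumes "qmat_eq (qmat_mult g ginv) qmat_one"
  shows "(\<Sum>l<3. scalar_conj ginv u g i l * scalar_conj ginv v g l j) = scalar_conj ginv (u * v) g i j"
proof -
  have delta: "(\<Sum>l<3. g k l * ginv l m) = (if k = m then 1 else 0)" if "k < 3" "m < 3" for k m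
    using assms that by (auto simp: qmat_eq_def qmat_mult_eq_sum[symmetric] qmat_one_def)
  have "(\<Sum>l<3. scalar_conj ginv u g i l * scalar_conj ginv v g l j)
     = (\<Sum>l<3. \<Sum>k<3. \<Sum>m<3. (ginv i k * u) * (g k l * ginv l m) * (v * g m j))"
    by (simp add: scalar_conj_def sum_distrib_left sum_distrib_right mult.assoc;
        rule sum.cong[OF refl]; rule sum.swap)
  also have "\<dots> = (\<Sum>k<3. \<Sum>m<3. \<Sum>l<3. (ginv i k * u) * (g k l * ginv l m) * (v * g m j))"
    by (subst sum.swap) (subst (2) sum.swap, simp)
  also have "\<dots> = (\<Sum>k<3. \<Sum>m<3. (ginv i k * u) * (\<Sum>l<3. g k l * ginv l m) * (v * g m j))"
    by (simp add: sum_distrib_left sum_distrib_right)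
  also have "\<dots> = (\<Sum>k<3. \<Sum>m<3. (ginv i k * u) * (if k = m then 1 else 0) * (v * g m j))"
    by (intro sum.cong refl) (simp add: delta)
  also have "\<dots> = (\<Sum>k<3. (ginv i k * u) * (v * g k j))"
    by (simp add: sum_lessThan_3)
  also have "\<dots> = scalar_conj ginv (u * v) g i j"
    by (simp add: scalar_conj_def mult.assoc)
  finally show ?thesis .
qed

lemma scalar_conj_one:
  assumes "qmat_eq (qmat_mult ginv g) qmat_one" "i < 3"
  shows "scalar_conj ginv 1 g i i = 1"
  using assms by (simp add: scalar_conj_def qmat_eq_def qmat_mult_eq_sum qmat_one_def)

lemma scalar_conj_uminus: "scalar_conj ginv (- u) g i j = - scalar_conj ginv u g i j"
  by (simp add: scalar_conj_def sum_negf)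

definition complex_qmat :: "complex list list \<Rightarrow> qmat" where
  "complex_qmat rows = (\<lambda>i j. qof_complex (rows ! i ! j))"

text \<open>Elements of \<open>SU(2,1)\<close> whose real span is the space of all complex \<open>3\<times>3\<close> matrices.\<close>
definition SU21_spanning_rows :: "complex list list list" where
  "SU21_spanning_rows =
    [[[1, 0, 0], [0, 1, 0], [0, 0, 1]],
     [[-1, 0, 0], [0, -1, 0], [0, 0, 1]],
     [[-1, 0, 0], [0, 1, 0], [0, 0, -1]],
     [[\<i>, 0, 0], [0, -\<i>, 0], [0, 0, 1]],
     [[\<i>, 0, 0], [0, \<i>, 0], [0, 0, -1]],
     [[1, 0, 0], [0, \<i>, 0], [0, 0, -\<i>]],
     [[-1, 0, 0], [0, \<i>, 0], [0, 0, \<i>]],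
     [[\<i>, 0, 0], [0, 1, 0], [0, 0, -\<i>]],
     [[0, 1, 0], [-1, 0, 0], [0, 0, 1]],
     [[0, \<i>, 0], [\<i>, 0, 0], [0, 0, 1]],
     [[0, 1, 0], [1, 0, 0], [0, 0, -1]],
     [[0, \<i>, 0], [-\<i>, 0, 0], [0, 0, -1]],
     [[5/4, 0, 3/4], [0, 1, 0], [3/4, 0, 5/4]],
     [[5/4, 0, 3/4], [0, -1, 0], [-3/4, 0, -5/4]],
     [[5/4, 0, 3/4*\<i>], [0, 1, 0], [-3/4*\<i>, 0, 5/4]],
     [[5/4, 0, 3/4*\<i>], [0, -1, 0], [3/4*\<i>, 0, -5/4]],
     [[1, 0, 0], [0, 5/4, 3/4], [0, 3/4, 5/4]],
     [[-1, 0, 0], [0, 5/4, 3/4], [0, -3/4, -5/4]],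
     [[1, 0, 0], [0, 5/4, 3/4*\<i>], [0, -3/4*\<i>, 5/4]],
     [[-1, 0, 0], [0, 5/4, 3/4*\<i>], [0, 3/4*\<i>, -5/4]]]"

lemma complex_qmat_in_SU21:
  assumes "cdet3 (\<lambda>i j. rows ! i ! j) = 1"
    and "qmat_eq (qmat_mult (qmat_adj (complex_qmat rows)) (qmat_mult I21 (complex_qmat rows))) I21"
  shows "complex_qmat rows \<in> SU21"
  using assms by (simp add: SU21_def complex_qmat_def q_is_complex_def)

lemma SU21_spanning_rows_in_SU21:
  assumes "rows \<in> set SU21_spanning_rows"
  shows "complex_qmat rows \<in> SU21"
  using assms by (intro complex_qmat_in_SU21)
    (auto simp: SU21_spanning_rows_def cdet3_def complex_eq_iff qmat_eq_def all_less_3 qmat_mult_def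
      qmat_adj_def I21_def complex_qmat_def qadd_def qmult_def qcnj_def qof_real_def quat_eq_iff)

lemma qmat_in_jC_if_annihilates_SU21:
  assumes "\<And>A. A \<in> SU21 \<Longrightarrow> (\<Sum>k<3. \<Sum>j<3. qre (V k j * A j k)) = 0"
  shows "qmat_in_jC V"
proof -
  have "\<forall>rows\<in>set SU21_spanning_rows. (\<Sum>k<3. \<Sum>j<3. qre (V k j * complex_qmat rows j k)) = 0"
    using assms SU21_spanning_rows_in_SU21 by blast
  then show ?thesis
    by (simp add: qmat_in_jC_def SU21_spanning_rows_def complex_qmat_def sum_lessThan_3 all_less_3)
qed

lemma scalar_conj_k_not_in_jC:
  assumes inverse: "qmat_eq (qmat_mult g ginv) qmat_one" "qmat_eq (qmat_mult ginv g) qmat_one"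
    and i_in_jC: "qmat_in_jC (scalar_conj ginv (Quat 0 1 0 0) g)"
    and j_in_jC: "qmat_in_jC (scalar_conj ginv (Quat 0 0 1 0) g)"
  shows "\<not> qmat_in_jC (scalar_conj ginv (Quat 0 0 0 1) g)"
proof
  let ?U = "scalar_conj ginv"
  assume k_in_jC: "qmat_in_jC (?U (Quat 0 0 0 1) g)"
  have k_zero: "?U (Quat 0 0 0 1) g i j = 0" if "i < 3" "j < 3" for i j
  proof -
    have "Quat 0 1 0 0 * Quat 0 0 1 0 = Quat 0 0 0 1"
      by (simp add: quat_eq_iff)
    then have "?U (Quat 0 0 0 1) g i j = (\<Sum>l<3. ?U (Quat 0 1 0 0) g i l * ?U (Quat 0 0 1 0) g l j)"
      by (simp add: scalar_conj_mult[OF inverse(1)])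
    then have "q_is_complex (?U (Quat 0 0 0 1) g i j)"
      using qmat_in_jC_mult_complex[OF i_in_jC j_in_jC that] by simp
    then show ?thesis
      using k_in_jC that by (simp add: q_is_complex_iff qmat_in_jC_def quat_eq_iff)
  qed
  have "Quat 0 0 0 1 * Quat 0 0 0 1 = - 1"
    by (simp add: quat_eq_iff)
  then have "?U (- 1) g 0 0 = (\<Sum>l<3. ?U (Quat 0 0 0 1) g 0 l * ?U (Quat 0 0 0 1) g l 0)"
    by (simp add: scalar_conj_mult[OF inverse(1)])
  also have "\<dots> = 0"
    by (simp add: k_zero)
  finally show False
    using scalar_conj_one[OF inverse(2), of 0] by (simp add: scalar_conj_uminus)
qed

theorem lemma4p7:
  assumes "g \<in> Sp21"
    and "qmat_eq (qmat_mult g ginv) qmat_one"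
    and "qmat_eq (qmat_mult ginv g) qmat_one"
  shows "\<exists>A\<in>SU21. \<not> q_is_real (qmat_trace (qmat_mult g (qmat_mult A ginv)))"
proof (rule ccontr)
  assume "\<not> ?thesis"
  then have real_trace: "q_is_real (qmat_trace (qmat_mult g (qmat_mult A ginv)))" if "A \<in> SU21" for A
    using that by blast
  have "qmat_in_jC (scalar_conj ginv u g)" if "qre u = 0" for u
  proof (rule qmat_in_jC_if_annihilates_SU21)
    fix A assume "A \<in> SU21"
    then obtain r where "qmat_trace (qmat_mult g (qmat_mult A ginv)) = qof_real r"
      using real_trace unfolding q_is_real_def by blast
    then have "qre (u * qmat_trace (qmat_mult g (qmat_mult A ginv))) = 0"
      using that by (simp add: qof_real_def)
    then show "(\<Sum>k<3. \<Sum>j<3. qre (scalar_conj ginv u g k j * A j k)) = 0"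
      by (simp only: qre_mult_trace_conj)
  qed
  then show False
    using scalar_conj_k_not_in_jC[OF assms(2,3)] by simp
qed

end
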